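(* Let $p>1$ and let $A$ be a complex $r$-matrix of order $n_1\times\cdots\times n_r$. Then \[ \|A\|_p\leq|A|_{p/(p-1)}, \] and equality holds if and only if $A$ is a rank-one matrix.
   Context: An $r$-matrix of order $n_1\times\cdots\times n_r$ is a function on $[n_1]\times\cdots\times[n_r]$ with values $a_{i_1,\ldots,i_r}$. $|A|_q=(\sum|a_{i_1,\ldots,i_r}|^q)^{1/q}$ is the entrywise $\ell^q$ norm. The spectral $p$-norm is $\|A\|_p=\max\{|\sum a_{i_1,\ldots,i_r}\overline{x^{(1)}_{i_1}}\cdots\overline{x^{(r)}_{i_r}}|:\mathbf{x}^{(k)}\in\mathbb{C}^{n_k},\ |\mathbf{x}^{(k)}|_p=1\ \forall k\}$. $A$ is rank-one if there are vectors $\mathbf{x}^{(k)}\in\mathbb{C}^{n_k}$ with $a_{i_1,\ldots,i_r}=x^{(1)}_{i_1}\cdots x^{(r)}_{i_r}$ for all indices. *)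

theory Defs
  imports "HOL-Analysis.Analysis"
begin

text \<open>An r-matrix of order n_0 x ... x n_(r-1) (indices shifted to start at 0) is a
  complex-valued function on the index set below: extensional functions i with
  i k < n k for k < r.\<close>

definition rindex :: "nat \<Rightarrow> (nat \<Rightarrow> nat) \<Rightarrow> (nat \<Rightarrow> nat) set" where
  "rindex r n = PiE {..<r} (\<lambda>k. {..<n k})"

definition entry_norm :: "nat \<Rightarrow> (nat \<Rightarrow> nat) \<Rightarrow> real \<Rightarrow> ((nat \<Rightarrow> nat) \<Rightarrow> complex) \<Rightarrow> real" where
  "entry_norm r n q A = (\<Sum>i\<in>rindex r n. cmod (A i) powr q) powr (1 / q)"

definition vec_norm :: "real \<Rightarrow> nat \<Rightarrow> (nat \<Rightarrow> complex) \<Rightarrow> real" where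
  "vec_norm p m v = (\<Sum>j<m. cmod (v j) powr p) powr (1 / p)"

text \<open>Spectral p-norm: the maximum (here: supremum, which is attained) of
  |sum_i a_i conj(x^(1)_{i_1}) ... conj(x^(r)_{i_r})| over l^p unit vectors.\<close>
definition spec_norm :: "nat \<Rightarrow> (nat \<Rightarrow> nat) \<Rightarrow> real \<Rightarrow> ((nat \<Rightarrow> nat) \<Rightarrow> complex) \<Rightarrow> real" where
  "spec_norm r n p A = Sup {cmod (\<Sum>i\<in>rindex r n. A i * (\<Prod>k<r. cnj (x k (i k)))) | x.
      \<forall>k<r. vec_norm p (n k) (x k) = 1}"

definition rank_one :: "nat \<Rightarrow> (nat \<Rightarrow> nat) \<Rightarrow> ((nat \<Rightarrow> nat) \<Rightarrow> complex) \<Rightarrow> bool" where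
  "rank_one r n A \<longleftrightarrow> (\<exists>x :: nat \<Rightarrow> nat \<Rightarrow> complex.
      \<forall>i\<in>rindex r n. A i = (\<Prod>k<r. x k (i k)))"

end

theory Submission
  imports Defs
begin

text \<open>
  Write \<open>q = p/(p-1)\<close>. The pairing of \<open>A\<close> with a tensor \<open>x\<^sub>1 \<otimes> \<dots> \<otimes> x\<^sub>r\<close> of
  \<open>\<ell>\<^sup>p\<close>-unit vectors is a sum over all entries against a vector whose \<open>\<ell>\<^sup>p\<close>-norm is
  \<open>\<Prod>k |x\<^sub>k|\<^sub>p = 1\<close>, so Holder's inequality bounds it by \<open>|A|\<^sub>q\<close>. For a rank-one
  \<open>A = y\<^sub>1 \<otimes> \<dots> \<otimes> y\<^sub>r\<close> both the pairing and \<open>|A|\<^sub>q\<close> factor over \<open>k\<close>, and choosing each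
  \<open>x\<^sub>k\<close> extremal for Holder against \<open>y\<^sub>k\<close> attains the bound. Conversely, the supremum
  is attained by compactness of the unit spheres; at a maximiser equality holds both in the
  triangle inequality, which aligns all phases, and in Holder's inequality, which makes
  \<open>|A\<^sub>i|\<close> proportional to \<open>|x\<^sub>1(i\<^sub>1) \<cdots> x\<^sub>r(i\<^sub>r)|\<^sup>p\<^sup>-\<^sup>1\<close>. Together these express \<open>A\<close> as a constant
  times \<open>x\<^sub>1 |x\<^sub>1|\<^sup>p\<^sup>-\<^sup>2 \<otimes> \<dots> \<otimes> x\<^sub>r |x\<^sub>r|\<^sup>p\<^sup>-\<^sup>2\<close>, a rank-one matrix.
\<close>

section \<open>Holder's inequality and its equality case\<close>

lemma conjugate_exponent:
  fixes p :: real
  assumes "p > 1"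
  shows "p / (p - 1) > 1" "1/p + 1/(p / (p - 1)) = 1"
  using assms by (simp_all add: field_simps)

lemma powr_mult_self_powr:
  fixes \<beta> :: real
  assumes "\<beta> \<ge> 0"
  shows "\<beta> * \<beta> powr (q - 2) = \<beta> powr (q - 1)" "\<beta>\<^sup>2 * \<beta> powr (q - 2) = \<beta> powr q"
  using powr_mult_base[OF assms, of "q - 2"] powr_mult_base[OF assms, of "q - 1"]
  by (simp_all add: power2_eq_square mult.assoc)

lemma powr_less_convex_comb:
  fixes t \<alpha> :: real
  assumes "0 < \<alpha>" "\<alpha> < 1" "t > 0" "t \<noteq> 1"
  shows "t powr \<alpha> < \<alpha> * t + (1 - \<alpha>)"
proof -
  \<comment> \<open>Weak Young at \<open>sqrt t\<close>, squared; the square gains the strictly positive term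
      \<open>\<alpha>(1-\<alpha>)(sqrt t - 1)\<^sup>2\<close>.\<close>
  define s where "s = sqrt t"
  have s: "s > 0" "s * s = t" "s \<noteq> 1"
    using assms by (auto simp: s_def)
  have "s powr \<alpha> \<le> \<alpha> * s + (1 - \<alpha>)"
    using Youngs_inequality_0[of \<alpha> "1 - \<alpha>" s 1] assms s by simp
  then have "s powr \<alpha> * s powr \<alpha> \<le> (\<alpha> * s + (1 - \<alpha>)) * (\<alpha> * s + (1 - \<alpha>))"
    using assms s by (intro mult_mono) auto
  then have "t powr \<alpha> \<le> (\<alpha> * s + (1 - \<alpha>)) * (\<alpha> * s + (1 - \<alpha>))"
    using s by (simp flip: powr_mult)
  also have "\<dots> = \<alpha> * t + (1 - \<alpha>) - \<alpha> * (1 - \<alpha>) * ((s - 1) * (s - 1))"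
    using s by (simp add: algebra_simps)
  also have "\<dots> < \<alpha> * t + (1 - \<alpha>)"
  proof -
    have "0 < (s - 1) * (s - 1)"
      using s(3) by (auto simp: zero_less_mult_iff neq_iff)
    then show ?thesis
      using assms by (simp add: mult_pos_pos)
  qed
  finally show ?thesis .
qed

lemma Youngs_inequality_eq_imp:
  fixes p q a b :: real
  assumes "p > 1" "q > 1" "1/p + 1/q = 1" "a \<ge> 0" "b \<ge> 0"
    and eq: "a * b = a powr p / p + b powr q / q"
  shows "a powr p = b powr q"
proof (rule ccontr)
  assume ne: "a powr p \<noteq> b powr q"
  have "a > 0" "b > 0"
    using eq ne assms by (auto simp: order_le_less)
  define u v where "u = a powr p" and "v = b powr q"
  have uv: "u > 0" "v > 0" "u / v \<noteq> 1"
    using \<open>a > 0\<close> \<open>b > 0\<close> ne by (auto simp: u_def v_def)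
  have "a * b = (u / v) powr (1/p) * v"
  proof -
    have "q * (1 - 1/p) = 1"
      using assms(2,3) by (simp add: field_simps)
    then have "a = u powr (1/p)" "b = v powr (1 - 1/p)"
      using \<open>a > 0\<close> \<open>b > 0\<close> assms by (auto simp: u_def v_def powr_powr)
    moreover have "v powr (1 - 1/p) = v / v powr (1/p)"
      using uv by (simp add: powr_diff)
    ultimately show ?thesis
      using uv by (simp add: powr_divide)
  qed
  also have "\<dots> < ((1/p) * (u / v) + (1 - 1/p)) * v"
    using powr_less_convex_comb[of "1/p" "u / v"] assms uv by simp
  also have "\<dots> = u / p + v * (1 - 1/p)"
    using uv by (simp add: algebra_simps)
  also have "1 - 1/p = 1/q"
    using assms(3) by linarith
  finally show False
    using eq by (simp add: u_def v_def)
qed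

lemma sum_Young_normalized:
  fixes a b :: "'i \<Rightarrow> real"
  assumes "p > 1" "q > 1" "1/p + 1/q = 1"
    and a: "\<forall>i\<in>I. a i \<ge> 0" and b: "(\<Sum>i\<in>I. b i powr p) = 1"
    and K: "K = (\<Sum>i\<in>I. a i powr q) powr (1/q)" "K > 0"
  shows "(\<Sum>i\<in>I. (a i / K) powr q / q + b i powr p / p) = 1"
proof -
  have "(\<Sum>i\<in>I. (a i / K) powr q) = (\<Sum>i\<in>I. a i powr q) / K powr q"
    using a K(2) by (simp add: powr_divide sum_divide_distrib)
  also have "K powr q = (\<Sum>i\<in>I. a i powr q)"
    using K assms(2) by (simp add: powr_powr sum_nonneg)
  finally have "(\<Sum>i\<in>I. (a i / K) powr q) = 1"
    using K(2) \<open>K powr q = _\<close> powr_gt_zero[of K q] by simp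
  then show ?thesis
    using assms(3) b by (simp add: sum.distrib flip: sum_divide_distrib)
qed

lemma Holder_sum_normalized:
  fixes a b :: "'i \<Rightarrow> real"
  assumes "p > 1" "q > 1" "1/p + 1/q = 1"
    and a: "\<forall>i\<in>I. a i \<ge> 0" and b: "\<forall>i\<in>I. b i \<ge> 0" "(\<Sum>i\<in>I. b i powr p) = 1"
  shows "(\<Sum>i\<in>I. a i * b i) \<le> (\<Sum>i\<in>I. a i powr q) powr (1/q)"
proof (cases "(\<Sum>i\<in>I. a i powr q) powr (1/q) > 0")
  case True
  define K where "K = (\<Sum>i\<in>I. a i powr q) powr (1/q)"
  have "(\<Sum>i\<in>I. a i / K * b i) \<le> (\<Sum>i\<in>I. (a i / K) powr q / q + b i powr p / p)"
  proof (rule sum_mono)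
    fix i assume "i \<in> I"
    then show "a i / K * b i \<le> (a i / K) powr q / q + b i powr p / p"
      using Youngs_inequality[of q p "a i / K" "b i"] assms True by (simp add: K_def add.commute)
  qed
  also have "\<dots> = 1"
    using sum_Young_normalized[OF assms(1-3) a b(2) K_def] True by (simp add: K_def)
  finally have "(\<Sum>i\<in>I. a i * b i) / K \<le> 1"
    by (simp add: sum_divide_distrib)
  then show ?thesis
    using True by (simp add: K_def pos_divide_le_eq)
next
  case False
  have "finite I"
    using b(2) by (rule_tac ccontr) simp
  have "(\<Sum>i\<in>I. a i powr q) = 0"
    using False by (simp add: not_less)
  then have "\<forall>i\<in>I. a i = 0"
    using \<open>finite I\<close> by (simp add: sum_nonneg_eq_0_iff)
  then show ?thesis
    by simp
qed

lemma Holder_sum_normalized_eq_imp: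
  fixes a b :: "'i \<Rightarrow> real"
  assumes "finite I" "p > 1" "q > 1" "1/p + 1/q = 1"
    and a: "\<forall>i\<in>I. a i \<ge> 0" and b: "\<forall>i\<in>I. b i \<ge> 0" "(\<Sum>i\<in>I. b i powr p) = 1"
    and eq: "(\<Sum>i\<in>I. a i * b i) = (\<Sum>i\<in>I. a i powr q) powr (1/q)"
  shows "\<forall>i\<in>I. a i = (\<Sum>i\<in>I. a i powr q) powr (1/q) * b i powr (p - 1)"
proof -
  define K where "K = (\<Sum>i\<in>I. a i powr q) powr (1/q)"
  show ?thesis
  proof (cases "K = 0")
    case True
    then have "(\<Sum>i\<in>I. a i powr q) = 0"
      by (simp add: K_def)
    then show ?thesis
      using \<open>finite I\<close> by (simp add: sum_nonneg_eq_0_iff)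
  next
    case False
    then have "K > 0"
      by (simp add: K_def order_less_le)
    define R where "R i = (a i / K) powr q / q + b i powr p / p" for i
    have Young: "a i / K * b i \<le> R i" if "i \<in> I" for i
      using Youngs_inequality[of q p "a i / K" "b i"] assms \<open>K > 0\<close> that
      by (simp add: R_def add.commute)
    have "(\<Sum>i\<in>I. R i - a i / K * b i) = (\<Sum>i\<in>I. R i) - (\<Sum>i\<in>I. a i * b i) / K"
      by (simp add: sum_subtractf sum_divide_distrib)
    also have "\<dots> = 0"
      using sum_Young_normalized[OF assms(2-4) a b(2) K_def \<open>K > 0\<close>] eq \<open>K > 0\<close>
      by (simp add: R_def K_def)
    finally have "\<forall>i\<in>I. R i - a i / K * b i = 0"
      using Young \<open>finite I\<close> by (subst (asm) sum_nonneg_eq_0_iff) auto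
    then have Young_eq: "(a i / K) powr q = b i powr p" if "i \<in> I" for i
      using Youngs_inequality_eq_imp[of q p "a i / K" "b i"] assms \<open>K > 0\<close> that
      by (simp add: R_def add.commute)
    have "a i = K * b i powr (p - 1)" if "i \<in> I" for i
    proof -
      have "a i / K = ((a i / K) powr q) powr (1/q)"
        using a that \<open>K > 0\<close> assms(3) by (simp add: powr_powr)
      also have "\<dots> = b i powr (p / q)"
        using Young_eq that b by (simp add: powr_powr)
      also have "p / q = p - 1"
        using assms(2-4) by (simp add: field_simps)
      finally show ?thesis
        using \<open>K > 0\<close> by (simp add: field_simps)
    qed
    then show ?thesis
      unfolding K_def by blast
  qed
qed

lemma complex_eq_of_real_norm_if_Re_eq_norm:
  fixes u :: complex
  assumes "Re u = cmod u"
  shows "u = of_real (cmod u)"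
proof -
  have "(Re u)\<^sup>2 = (Re u)\<^sup>2 + (Im u)\<^sup>2"
    using assms cmod_power2[of u] by simp
  then show ?thesis
    using assms by (simp add: complex_eq_iff)
qed

lemma norm_sum_eq_sum_norm_imp_common_phase:
  fixes z :: "'i \<Rightarrow> complex"
  assumes "finite I" and eq: "cmod (\<Sum>i\<in>I. z i) = (\<Sum>i\<in>I. cmod (z i))"
  obtains w where "cmod w = 1" "\<forall>i\<in>I. z i = w * of_real (cmod (z i))"
proof (cases "(\<Sum>i\<in>I. z i) = 0")
  case True
  then have "\<forall>i\<in>I. z i = 0"
    using eq \<open>finite I\<close> by (simp add: sum_nonneg_eq_0_iff)
  then show ?thesis
    using that[of 1] by simp
next
  case False
  define S where "S = (\<Sum>i\<in>I. z i)"
  define w where "w = S / of_real (cmod S)"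
  have "cmod w = 1"
    using False by (simp add: S_def w_def norm_divide)
  then have w: "cmod w = 1" "w * cnj w = 1"
    using complex_norm_square[of w] by simp_all
  have le: "Re (cnj w * z i) \<le> cmod (z i)" for i
    using complex_Re_le_cmod[of "cnj w * z i"] w by (simp add: norm_mult)
  have "S \<noteq> 0"
    using False by (simp add: S_def)
  have "cnj w * S = S * cnj S / of_real (cmod S)"
    by (simp add: w_def mult.commute)
  also have "S * cnj S = of_real ((cmod S)\<^sup>2)"
    by (rule complex_norm_square[symmetric])
  also have "of_real ((cmod S)\<^sup>2) / of_real (cmod S) = (of_real (cmod S) :: complex)"
    using \<open>S \<noteq> 0\<close> by (simp add: power2_eq_square)
  finally have wS: "cnj w * S = of_real (cmod S)" .
  have "(\<Sum>i\<in>I. Re (cnj w * z i)) = Re (cnj w * S)"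
    by (simp add: S_def sum_distrib_left Re_sum)
  also have "\<dots> = (\<Sum>i\<in>I. cmod (z i))"
    using wS eq by (simp add: S_def)
  finally have "(\<Sum>i\<in>I. cmod (z i) - Re (cnj w * z i)) = 0"
    by (simp add: sum_subtractf)
  then have phase: "\<forall>i\<in>I. Re (cnj w * z i) = cmod (cnj w * z i)"
    using le w \<open>finite I\<close> by (subst (asm) sum_nonneg_eq_0_iff) (auto simp: norm_mult)
  have "z i = w * of_real (cmod (z i))" if "i \<in> I" for i
  proof -
    have "cnj w * z i = of_real (cmod (cnj w * z i))"
      using phase that by (simp add: complex_eq_of_real_norm_if_Re_eq_norm)
    then have "w * (cnj w * z i) = w * of_real (cmod (z i))"
      using w(1) by (simp add: norm_mult)
    then show ?thesis
      using w(2) by (simp add: mult.assoc[symmetric])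
  qed
  then show ?thesis
    using that[of w] w by simp
qed

lemma norm_sum_mult_cnj_le_Holder:
  fixes a b :: "'i \<Rightarrow> complex"
  assumes "p > 1" "q > 1" "1/p + 1/q = 1" "(\<Sum>i\<in>I. cmod (b i) powr p) = 1"
  shows "cmod (\<Sum>i\<in>I. a i * cnj (b i)) \<le> (\<Sum>i\<in>I. cmod (a i) powr q) powr (1/q)"
proof -
  have "cmod (\<Sum>i\<in>I. a i * cnj (b i)) \<le> (\<Sum>i\<in>I. cmod (a i) * cmod (b i))"
    using norm_sum[of "\<lambda>i. a i * cnj (b i)" I] by (simp add: norm_mult)
  also have "\<dots> \<le> (\<Sum>i\<in>I. cmod (a i) powr q) powr (1/q)"
    using Holder_sum_normalized[of p q I "\<lambda>i. cmod (a i)" "\<lambda>i. cmod (b i)"] assms by simp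
  finally show ?thesis .
qed

lemma norm_sum_mult_cnj_eq_Holder_imp:
  fixes a b :: "'i \<Rightarrow> complex"
  assumes "finite I" "p > 1" "q > 1" "1/p + 1/q = 1"
    and b: "(\<Sum>i\<in>I. cmod (b i) powr p) = 1"
    and eq: "cmod (\<Sum>i\<in>I. a i * cnj (b i)) = (\<Sum>i\<in>I. cmod (a i) powr q) powr (1/q)"
  obtains c where "\<forall>i\<in>I. a i = c * b i * of_real (cmod (b i) powr (p - 2))"
  \<comment> \<open>For \<open>p < 2\<close> the factor \<open>0 powr (p - 2)\<close> at a zero entry is the junk value \<open>0\<close>,
      harmless because it is multiplied by \<open>b i = 0\<close>.\<close>
proof -
  define K where "K = (\<Sum>i\<in>I. cmod (a i) powr q) powr (1/q)"
  have norm_prod: "(\<Sum>i\<in>I. cmod (a i * cnj (b i))) = (\<Sum>i\<in>I. cmod (a i) * cmod (b i))"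
    by (simp add: norm_mult)
  have "K \<le> (\<Sum>i\<in>I. cmod (a i) * cmod (b i))"
    using eq norm_sum[of "\<lambda>i. a i * cnj (b i)" I] norm_prod by (simp add: K_def)
  moreover have "(\<Sum>i\<in>I. cmod (a i) * cmod (b i)) \<le> K"
    using Holder_sum_normalized[of p q I "\<lambda>i. cmod (a i)" "\<lambda>i. cmod (b i)"] assms
    by (simp add: K_def)
  ultimately have sum_eq: "(\<Sum>i\<in>I. cmod (a i) * cmod (b i)) = K"
    by (rule antisym[symmetric])
  then have norm_eq: "cmod (\<Sum>i\<in>I. a i * cnj (b i)) = (\<Sum>i\<in>I. cmod (a i * cnj (b i)))"
    using eq norm_prod K_def by linarith
  have abs_eq: "\<forall>i\<in>I. cmod (a i) = K * cmod (b i) powr (p - 1)"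
    unfolding K_def
    by (rule Holder_sum_normalized_eq_imp[OF assms(1-4)]) (use b sum_eq K_def in auto)
  obtain w where "cmod w = 1" and w: "\<forall>i\<in>I. a i * cnj (b i) = w * of_real (cmod (a i * cnj (b i)))"
    using norm_sum_eq_sum_norm_imp_common_phase[OF \<open>finite I\<close> norm_eq] by blast
  have "a i = w * K * b i * of_real (cmod (b i) powr (p - 2))" if "i \<in> I" for i
  proof (cases "b i = 0")
    case True
    then show ?thesis
      using abs_eq[rule_format, OF that] by simp
  next
    case False
    define \<beta> where "\<beta> = cmod (b i)"
    have "\<beta> > 0"
      using False by (simp add: \<beta>_def)
    have "a i * of_real (\<beta>\<^sup>2) = a i * cnj (b i) * b i"
      using complex_norm_square[of "b i"] by (simp add: \<beta>_def ac_simps)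
    also have "\<dots> = w * of_real (K * (\<beta> powr (p - 1) * \<beta>)) * b i"
      using w abs_eq that by (simp add: \<beta>_def norm_mult mult.assoc)
    also have "\<beta> powr (p - 1) * \<beta> = \<beta> powr (p - 2) * \<beta>\<^sup>2"
    proof -
      have "\<beta> powr (p - 1) = \<beta> powr (p - 2) * \<beta> powr 1"
        by (subst powr_add[symmetric]) simp
      then show ?thesis
        using \<open>\<beta> > 0\<close> by (simp add: power2_eq_square)
    qed
    finally have "a i * of_real (\<beta>\<^sup>2) = (w * K * b i * of_real (\<beta> powr (p - 2))) * of_real (\<beta>\<^sup>2)"
      by (simp add: algebra_simps)
    then show ?thesis
      using \<open>\<beta> > 0\<close> by (simp add: \<beta>_def)
  qed
  then show ?thesis
    using that[of "w * K"] by blast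
qed

section \<open>Unit vectors\<close>

lemma bounded_imp_convergent_subsequence_finite:
  fixes Y :: "nat \<Rightarrow> 'a \<Rightarrow> 'b::heine_borel"
  assumes "finite S" "\<forall>a\<in>S. bounded (range (\<lambda>m. Y m a))"
  obtains \<sigma> L where "strict_mono \<sigma>" "\<forall>a\<in>S. (\<lambda>m. Y (\<sigma> m) a) \<longlonglongrightarrow> L a"
proof -
  have "\<exists>\<sigma> L. strict_mono \<sigma> \<and> (\<forall>a\<in>S. (\<lambda>m. Y (\<sigma> m) a) \<longlonglongrightarrow> L a)"
    using assms
  proof (induction S rule: finite_induct)
    case empty
    show ?case
      using strict_mono_id by blast
  next
    case (insert a S)
    then obtain \<sigma> L where \<sigma>: "strict_mono \<sigma>" and L: "\<forall>b\<in>S. (\<lambda>m. Y (\<sigma> m) b) \<longlonglongrightarrow> L b"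
      by auto
    have "bounded (range (\<lambda>m. Y (\<sigma> m) a))"
      using insert.prems by (rule_tac bounded_subset[of "range (\<lambda>m. Y m a)"]) auto
    then obtain l \<tau> where \<tau>: "strict_mono \<tau>" and l: "((\<lambda>m. Y (\<sigma> m) a) \<circ> \<tau>) \<longlonglongrightarrow> l"
      using bounded_imp_convergent_subsequence by blast
    have "(\<lambda>m. Y (\<sigma> (\<tau> m)) b) \<longlonglongrightarrow> (L(a := l)) b" if "b \<in> insert a S" for b
    proof (cases "b = a")
      case True
      then show ?thesis
        using l by (simp add: o_def)
    next
      case False
      then have "((\<lambda>m. Y (\<sigma> m) b) \<circ> \<tau>) \<longlonglongrightarrow> L b"
        using L that \<tau> by (intro LIMSEQ_subseq_LIMSEQ) auto
      then show ?thesis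
        using False by (simp add: o_def)
    qed
    moreover have "strict_mono (\<lambda>m. \<sigma> (\<tau> m))"
      using strict_mono_o[OF \<sigma> \<tau>] by (simp add: o_def)
    ultimately show ?case
      by (intro exI[of _ "\<lambda>m. \<sigma> (\<tau> m)"] exI[of _ "L(a := l)"]) simp
  qed
  then show ?thesis
    using that by blast
qed

lemma vec_norm_eq_1_iff:
  assumes "p > 0"
  shows "vec_norm p m v = 1 \<longleftrightarrow> (\<Sum>j<m. cmod (v j) powr p) = 1"
proof -
  define s where "s = (\<Sum>j<m. cmod (v j) powr p)"
  have "s powr (1/p) = 1 \<longleftrightarrow> s = 1"
  proof
    assume "s powr (1/p) = 1"
    moreover have "s \<ge> 0"
      by (simp add: s_def sum_nonneg)
    ultimately show "s = 1"
      using assms powr_powr[of s "1/p" p] by (cases "s = 0") auto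
  qed simp
  then show ?thesis
    by (simp add: vec_norm_def s_def)
qed

lemma norm_le_1_if_vec_norm_eq_1:
  assumes "p > 0" "vec_norm p m v = 1" "j < m"
  shows "cmod (v j) \<le> 1"
proof -
  have "cmod (v j) powr p \<le> (\<Sum>j<m. cmod (v j) powr p)"
    using assms(3) by (intro member_le_sum) auto
  also have "\<dots> = 1"
    using assms(1,2) by (simp add: vec_norm_eq_1_iff)
  finally have "cmod (v j) powr p \<le> 1" .
  show ?thesis
  proof (rule ccontr)
    assume "\<not> cmod (v j) \<le> 1"
    then have "1 < cmod (v j) powr p"
      using assms(1) by (intro gr_one_powr) auto
    then show False
      using \<open>cmod (v j) powr p \<le> 1\<close> by simp
  qed
qed

lemma exists_unit_vector_dual:
  assumes "p > 1" "q > 1" "1/p + 1/q = 1" and N: "vec_norm q m y > 0"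
  obtains x where "vec_norm p m x = 1" "(\<Sum>j<m. y j * cnj (x j)) = of_real (vec_norm q m y)"
proof -
  define N where "N = vec_norm q m y"
  have Nq: "N powr q = (\<Sum>j<m. cmod (y j) powr q)"
    using \<open>q > 1\<close> by (simp add: N_def vec_norm_def powr_powr sum_nonneg)
  have "(q - 1) * p = q"
    using assms(1-3) by (simp add: field_simps)
  \<comment> \<open>The vector attaining equality in Holder's inequality against \<open>y\<close>.\<close>
  define x where "x j = y j * of_real (cmod (y j) powr (q - 2) / N powr (q - 1))" for j
  have "cmod (x j) powr p = cmod (y j) powr q / N powr q" for j
  proof -
    have "cmod (x j) = cmod (y j) powr (q - 1) / N powr (q - 1)"
      using N powr_mult_self_powr(1)[of "cmod (y j)" q]
      by (simp add: x_def N_def norm_mult norm_divide mult.assoc)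
    then show ?thesis
      using N \<open>(q - 1) * p = q\<close> by (simp add: N_def powr_divide powr_powr)
  qed
  moreover have "(\<Sum>j<m. cmod (y j) powr q) > 0"
    unfolding Nq[symmetric] using N by (simp add: N_def)
  ultimately have "vec_norm p m x = 1"
    using assms Nq by (simp add: vec_norm_eq_1_iff sum_divide_distrib[symmetric] N_def)
  moreover have "(\<Sum>j<m. y j * cnj (x j)) = of_real N"
  proof -
    have "y j * cnj (x j) = of_real (cmod (y j) powr q / N powr (q - 1))" for j
    proof -
      have "y j * cnj (x j) = y j * cnj (y j) * of_real (cmod (y j) powr (q - 2) / N powr (q - 1))"
        by (simp add: x_def mult.assoc)
      also have "y j * cnj (y j) = of_real ((cmod (y j))\<^sup>2)"
        by (rule complex_norm_square[symmetric])
      finally show ?thesis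
        by (simp only: of_real_mult[symmetric] times_divide_eq_right
            powr_mult_self_powr(2)[OF norm_ge_zero])
    qed
    then have "(\<Sum>j<m. y j * cnj (x j)) = of_real ((\<Sum>j<m. cmod (y j) powr q) / N powr (q - 1))"
      by (simp add: sum_divide_distrib)
    also have "(\<Sum>j<m. cmod (y j) powr q) / N powr (q - 1) = N"
      using N by (simp add: Nq[symmetric] N_def powr_diff)
    finally show ?thesis .
  qed
  ultimately show ?thesis
    using that unfolding N_def by blast
qed

section \<open>The spectral norm of an r-matrix\<close>

definition unit_tuples :: "real \<Rightarrow> nat \<Rightarrow> (nat \<Rightarrow> nat) \<Rightarrow> (nat \<Rightarrow> nat \<Rightarrow> complex) set" where
  "unit_tuples p r n = {x. \<forall>k<r. vec_norm p (n k) (x k) = 1}"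

definition pairing ::
    "nat \<Rightarrow> (nat \<Rightarrow> nat) \<Rightarrow> ((nat \<Rightarrow> nat) \<Rightarrow> complex) \<Rightarrow> (nat \<Rightarrow> nat \<Rightarrow> complex) \<Rightarrow> complex" where
  "pairing r n A x = (\<Sum>i\<in>rindex r n. A i * (\<Prod>k<r. cnj (x k (i k))))"

lemma finite_rindex: "finite (rindex r n)"
  by (simp add: rindex_def finite_PiE)

lemma rindex_less: "i \<in> rindex r n \<Longrightarrow> k < r \<Longrightarrow> i k < n k"
  by (auto simp: rindex_def PiE_iff)

lemma sum_prod_rindex:
  fixes f :: "nat \<Rightarrow> nat \<Rightarrow> 'a::comm_semiring_1"
  shows "(\<Sum>i\<in>rindex r n. \<Prod>k<r. f k (i k)) = (\<Prod>k<r. \<Sum>j<n k. f k j)"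
  unfolding rindex_def by (subst prod_sum_PiE) auto

lemma sum_norm_powr_prod_rindex:
  "(\<Sum>i\<in>rindex r n. cmod (\<Prod>k<r. x k (i k)) powr p) = (\<Prod>k<r. \<Sum>j<n k. cmod (x k j) powr p)"
  using sum_prod_rindex[of "\<lambda>k j. cmod (x k j) powr p" r n]
  by (simp add: prod_powr_distrib flip: prod_norm)

lemma sum_norm_powr_prod_unit_tuple:
  assumes "p > 0" "x \<in> unit_tuples p r n"
  shows "(\<Sum>i\<in>rindex r n. cmod (\<Prod>k<r. x k (i k)) powr p) = 1"
  using assms by (simp add: sum_norm_powr_prod_rindex unit_tuples_def vec_norm_eq_1_iff)

lemma unit_tuples_nonempty:
  assumes "p > 0" "\<forall>k<r. n k \<ge> 1"
  shows "unit_tuples p r n \<noteq> {}"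
proof -
  define e :: "nat \<Rightarrow> complex" where "e j = (if j = 0 then 1 else 0)" for j
  have "vec_norm p m e = 1" if "m \<ge> 1" for m
  proof -
    have "(\<Sum>j<m. cmod (e j) powr p) = (\<Sum>j<m. if j = 0 then 1 else 0)"
      by (intro sum.cong) (auto simp: e_def)
    then show ?thesis
      using that assms(1) by (simp add: vec_norm_eq_1_iff Suc_le_eq)
  qed
  then have "(\<lambda>k. e) \<in> unit_tuples p r n"
    using assms(2) by (simp add: unit_tuples_def)
  then show ?thesis
    by blast
qed

lemma unit_tuples_convergent_subsequence:
  fixes X :: "nat \<Rightarrow> nat \<Rightarrow> nat \<Rightarrow> complex"
  assumes "p > 0" "\<forall>m. X m \<in> unit_tuples p r n"
  obtains \<sigma> x where "strict_mono \<sigma>" "x \<in> unit_tuples p r n"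
    "\<forall>k<r. \<forall>j<n k. (\<lambda>m. X (\<sigma> m) k j) \<longlonglongrightarrow> x k j"
proof -
  define S where "S = Sigma {..<r} (\<lambda>k. {..<n k})"
  have bounded: "\<forall>a\<in>S. bounded (range (\<lambda>m. X m (fst a) (snd a)))"
  proof (intro ballI bounded_subset[OF bounded_cball[of 0 1]], clarify)
    fix a m
    assume "a \<in> S"
    then show "X m (fst a) (snd a) \<in> cball 0 1"
      using assms norm_le_1_if_vec_norm_eq_1[of p "n (fst a)" "X m (fst a)" "snd a"]
      by (auto simp: S_def unit_tuples_def)
  qed
  have "finite S"
    by (simp add: S_def)
  then obtain \<sigma> L where \<sigma>: "strict_mono \<sigma>"
    and L: "\<forall>a\<in>S. (\<lambda>m. X (\<sigma> m) (fst a) (snd a)) \<longlonglongrightarrow> L a"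
    by (rule bounded_imp_convergent_subsequence_finite[OF _ bounded])
  define x where "x k j = L (k, j)" for k j
  have lim: "\<forall>k<r. \<forall>j<n k. (\<lambda>m. X (\<sigma> m) k j) \<longlonglongrightarrow> x k j"
  proof (intro allI impI)
    fix k j
    assume "k < r" "j < n k"
    then show "(\<lambda>m. X (\<sigma> m) k j) \<longlonglongrightarrow> x k j"
      using L[rule_format, of "(k, j)"] by (simp add: S_def x_def)
  qed
  have "vec_norm p (n k) (x k) = 1" if "k < r" for k
  proof -
    have "(\<lambda>m. \<Sum>j<n k. cmod (X (\<sigma> m) k j) powr p) \<longlonglongrightarrow> (\<Sum>j<n k. cmod (x k j) powr p)"
      using lim that assms(1) by (intro tendsto_sum tendsto_powr' tendsto_norm) auto
    moreover have "(\<lambda>m. \<Sum>j<n k. cmod (X (\<sigma> m) k j) powr p) = (\<lambda>m. 1)"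
      using assms that by (simp add: unit_tuples_def vec_norm_eq_1_iff)
    ultimately have "(\<Sum>j<n k. cmod (x k j) powr p) = 1"
      by (simp add: LIMSEQ_const_iff)
    then show ?thesis
      using assms(1) by (simp add: vec_norm_eq_1_iff)
  qed
  then have "x \<in> unit_tuples p r n"
    by (simp add: unit_tuples_def)
  then show ?thesis
    using that \<sigma> lim by blast
qed

lemma norm_pairing_le_entry_norm:
  assumes "p > 1" "x \<in> unit_tuples p r n"
  shows "cmod (pairing r n A x) \<le> entry_norm r n (p / (p - 1)) A"
  using norm_sum_mult_cnj_le_Holder[OF assms(1) conjugate_exponent[OF assms(1)]
      sum_norm_powr_prod_unit_tuple[OF _ assms(2)], where a = A] assms(1)
  by (simp add: pairing_def entry_norm_def)

lemma tendsto_pairing: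
  assumes "\<forall>k<r. \<forall>j<n k. (\<lambda>m. X m k j) \<longlonglongrightarrow> x k j"
  shows "(\<lambda>m. pairing r n A (X m)) \<longlonglongrightarrow> pairing r n A x"
  unfolding pairing_def using assms
  by (intro tendsto_sum tendsto_mult tendsto_const tendsto_prod tendsto_cnj) (auto intro: rindex_less)

lemma spec_norm_eq_SUP:
  "spec_norm r n p A = (SUP x\<in>unit_tuples p r n. cmod (pairing r n A x))"
  unfolding spec_norm_def pairing_def unit_tuples_def by (rule arg_cong[where f = Sup]) auto

lemma bdd_above_norm_pairing:
  assumes "p > 1"
  shows "bdd_above ((\<lambda>x. cmod (pairing r n A x)) ` unit_tuples p r n)"
  by (rule bdd_aboveI2) (rule norm_pairing_le_entry_norm[OF assms])

lemma norm_pairing_le_spec_norm: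
  assumes "p > 1" "x \<in> unit_tuples p r n"
  shows "cmod (pairing r n A x) \<le> spec_norm r n p A"
  unfolding spec_norm_eq_SUP using assms bdd_above_norm_pairing[OF assms(1)] by (rule_tac cSUP_upper)

lemma spec_norm_le_entry_norm:
  assumes "p > 1" "\<forall>k<r. n k \<ge> 1"
  shows "spec_norm r n p A \<le> entry_norm r n (p / (p - 1)) A"
  unfolding spec_norm_eq_SUP using assms unit_tuples_nonempty norm_pairing_le_entry_norm
  by (intro cSUP_least) auto

lemma spec_norm_nonneg:
  assumes "p > 1" "\<forall>k<r. n k \<ge> 1"
  shows "spec_norm r n p A \<ge> 0"
proof -
  obtain x where "x \<in> unit_tuples p r n"
    using unit_tuples_nonempty assms by fastforce
  then show ?thesis
    using norm_pairing_le_spec_norm[OF assms(1)] by (meson norm_ge_zero order_trans)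
qed

lemma spec_norm_attained:
  assumes "p > 1" "\<forall>k<r. n k \<ge> 1"
  obtains x where "x \<in> unit_tuples p r n" "cmod (pairing r n A x) = spec_norm r n p A"
proof -
  let ?V = "(\<lambda>x. cmod (pairing r n A x)) ` unit_tuples p r n"
  have "spec_norm r n p A \<in> closure ?V"
    unfolding spec_norm_eq_SUP
  proof (rule closure_contains_Sup)
    show "?V \<noteq> {}"
      using unit_tuples_nonempty assms by simp
    show "bdd_above ?V"
      by (rule bdd_above_norm_pairing[OF assms(1)])
  qed
  then obtain v where V: "\<forall>m. v m \<in> ?V" and v: "v \<longlonglongrightarrow> spec_norm r n p A"
    unfolding closure_sequential by blast
  have "\<forall>m. \<exists>x. x \<in> unit_tuples p r n \<and> v m = cmod (pairing r n A x)"
    using V by (auto simp: image_iff)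
  then obtain X where X: "\<forall>m. X m \<in> unit_tuples p r n \<and> v m = cmod (pairing r n A (X m))"
    by (rule exE[OF choice])
  then have X_mem: "\<forall>m. X m \<in> unit_tuples p r n"
    by blast
  have "p > 0"
    using assms(1) by simp
  obtain \<sigma> x where \<sigma>: "strict_mono \<sigma>" and x: "x \<in> unit_tuples p r n"
    and lim: "\<forall>k<r. \<forall>j<n k. (\<lambda>m. X (\<sigma> m) k j) \<longlonglongrightarrow> x k j"
    by (rule unit_tuples_convergent_subsequence[OF \<open>p > 0\<close> X_mem])
  have "(\<lambda>m. cmod (pairing r n A (X (\<sigma> m)))) \<longlonglongrightarrow> cmod (pairing r n A x)"
    using lim by (intro tendsto_norm tendsto_pairing)
  moreover have "(\<lambda>m. cmod (pairing r n A (X (\<sigma> m)))) \<longlonglongrightarrow> spec_norm r n p A"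
    using LIMSEQ_subseq_LIMSEQ[OF v \<sigma>] X by (simp add: o_def)
  ultimately have "cmod (pairing r n A x) = spec_norm r n p A"
    by (rule LIMSEQ_unique)
  then show ?thesis
    using that x by blast
qed

lemma entry_norm_rank_one:
  assumes "q > 0" "\<forall>i\<in>rindex r n. A i = (\<Prod>k<r. y k (i k))"
  shows "entry_norm r n q A = (\<Prod>k<r. vec_norm q (n k) (y k))"
proof -
  have "(\<Sum>i\<in>rindex r n. cmod (A i) powr q) = (\<Prod>k<r. \<Sum>j<n k. cmod (y k j) powr q)"
    using assms(2) sum_norm_powr_prod_rindex[where x = y and p = q] by (simp cong: sum.cong)
  then show ?thesis
    by (simp add: entry_norm_def vec_norm_def prod_powr_distrib)
qed

lemma entry_norm_le_spec_norm_if_rank_one: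
  assumes "p > 1" "\<forall>k<r. n k \<ge> 1" "rank_one r n A"
  shows "entry_norm r n (p / (p - 1)) A \<le> spec_norm r n p A"
proof -
  define q where "q = p / (p - 1)"
  note q = conjugate_exponent[OF \<open>p > 1\<close>, folded q_def]
  obtain y where y: "\<forall>i\<in>rindex r n. A i = (\<Prod>k<r. y k (i k))"
    using \<open>rank_one r n A\<close> by (auto simp: rank_one_def)
  have entry: "entry_norm r n q A = (\<Prod>k<r. vec_norm q (n k) (y k))"
    using entry_norm_rank_one[OF _ y] q by simp
  show ?thesis
  proof (cases "\<exists>k<r. vec_norm q (n k) (y k) = 0")
    case True
    then have "entry_norm r n q A = 0"
      by (auto simp: entry prod_zero_iff)
    then show ?thesis
      using spec_norm_nonneg[OF assms(1,2)] by (simp add: q_def)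
  next
    case False
    then have "\<forall>k<r. vec_norm q (n k) (y k) > 0"
      by (auto simp: vec_norm_def order_less_le)
    then have "\<forall>k<r. \<exists>x. vec_norm p (n k) x = 1 \<and>
        (\<Sum>j<n k. y k j * cnj (x j)) = of_real (vec_norm q (n k) (y k))"
      using exists_unit_vector_dual[OF \<open>p > 1\<close> q] by metis
    then obtain x where x: "\<forall>k<r. vec_norm p (n k) (x k) = 1 \<and>
        (\<Sum>j<n k. y k j * cnj (x k j)) = of_real (vec_norm q (n k) (y k))"
      by metis
    have "pairing r n A x = (\<Sum>i\<in>rindex r n. \<Prod>k<r. y k (i k) * cnj (x k (i k)))"
      using y by (simp add: pairing_def prod.distrib)
    also have "\<dots> = (\<Prod>k<r. \<Sum>j<n k. y k j * cnj (x k j))"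
      by (rule sum_prod_rindex)
    also have "\<dots> = of_real (entry_norm r n q A)"
      using x by (simp add: entry)
    finally have "cmod (pairing r n A x) = \<bar>entry_norm r n q A\<bar>"
      by (metis norm_of_real)
    then have "entry_norm r n q A = cmod (pairing r n A x)"
      by (simp add: entry_norm_def)
    also have "\<dots> \<le> spec_norm r n p A"
      using x \<open>p > 1\<close> by (intro norm_pairing_le_spec_norm) (auto simp: unit_tuples_def)
    finally show ?thesis
      by (simp add: q_def)
  qed
qed

lemma rank_one_if_norm_pairing_eq_entry_norm:
  assumes "p > 1" "r \<ge> 1" "x \<in> unit_tuples p r n"
    and eq: "cmod (pairing r n A x) = entry_norm r n (p / (p - 1)) A"
  shows "rank_one r n A"
proof -
  have "(\<Sum>i\<in>rindex r n. cmod (\<Prod>k<r. x k (i k)) powr p) = 1"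
    using assms(1,3) by (intro sum_norm_powr_prod_unit_tuple) auto
  moreover have "cmod (\<Sum>i\<in>rindex r n. A i * cnj (\<Prod>k<r. x k (i k))) =
      (\<Sum>i\<in>rindex r n. cmod (A i) powr (p / (p - 1))) powr (1 / (p / (p - 1)))"
    using eq by (simp add: pairing_def entry_norm_def)
  ultimately obtain c where c: "\<forall>i\<in>rindex r n.
      A i = c * (\<Prod>k<r. x k (i k)) * of_real (cmod (\<Prod>k<r. x k (i k)) powr (p - 2))"
    by (rule norm_sum_mult_cnj_eq_Holder_imp[OF finite_rindex \<open>p > 1\<close> conjugate_exponent[OF \<open>p > 1\<close>]])
  define y where "y k j = (if k = 0 then c else 1) * (x k j * of_real (cmod (x k j) powr (p - 2)))"
    for k j
  have "A i = (\<Prod>k<r. y k (i k))" if "i \<in> rindex r n" for i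
  proof -
    have "(\<Prod>k<r. y k (i k)) = (\<Prod>k<r. if k = 0 then c else 1) *
        ((\<Prod>k<r. x k (i k)) * (\<Prod>k<r. of_real (cmod (x k (i k)) powr (p - 2))))"
      by (simp add: y_def prod.distrib)
    also have "(\<Prod>k<r. if k = 0 then c else 1) = c"
      using \<open>r \<ge> 1\<close> by (simp add: prod.delta)
    also have "(\<Prod>k<r. of_real (cmod (x k (i k)) powr (p - 2))) =
        (of_real (cmod (\<Prod>k<r. x k (i k)) powr (p - 2)) :: complex)"
      by (simp add: prod_powr_distrib flip: prod_norm)
    finally show ?thesis
      using c that by (simp add: mult.assoc)
  qed
  then show ?thesis
    unfolding rank_one_def by blast
qed

theorem theorem20:
  fixes r :: nat and n :: "nat \<Rightarrow> nat" and p :: real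
    and A :: "(nat \<Rightarrow> nat) \<Rightarrow> complex"
  assumes "p > 1" and "r \<ge> 1" and "\<forall>k<r. n k \<ge> 1"
  shows "spec_norm r n p A \<le> entry_norm r n (p / (p - 1)) A \<and>
         (spec_norm r n p A = entry_norm r n (p / (p - 1)) A \<longleftrightarrow> rank_one r n A)"
proof -
  have le: "spec_norm r n p A \<le> entry_norm r n (p / (p - 1)) A"
    using spec_norm_le_entry_norm[OF assms(1,3)] .
  moreover have "rank_one r n A" if "spec_norm r n p A = entry_norm r n (p / (p - 1)) A"
  proof -
    obtain x where x: "x \<in> unit_tuples p r n" "cmod (pairing r n A x) = spec_norm r n p A"
      using spec_norm_attained[OF assms(1,3)] .
    show ?thesis
      using x(2) that by (intro rank_one_if_norm_pairing_eq_entry_norm[OF assms(1,2) x(1)]) simp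
  qed
  moreover have "spec_norm r n p A = entry_norm r n (p / (p - 1)) A" if "rank_one r n A"
    using le entry_norm_le_spec_norm_if_rank_one[OF assms(1,3) that] by (rule antisym)
  ultimately show ?thesis
    by blast
qed

end
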